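(* Let $k$ be a field, $Q=k[x,y,z]$, $\mathfrak m=(x,y,z)$, and let $I\subseteq\mathfrak m^2$ be a homogeneous integrally closed ideal. Then $[I:x]\cdot[I:(y,z)]\subseteq I$.
   Context: For ideals $I,L$ of $Q$, $I:L=\{f\in Q: fL\subseteq I\}$ and $I:f=I:(f)$. An ideal is integrally closed if it equals its integral closure. *)

theory Defs
  imports Main "HOL-Computational_Algebra.Polynomial"
begin

definition is_ideal :: "'r::comm_ring_1 set \<Rightarrow> bool" where
  "is_ideal I \<longleftrightarrow> 0 \<in> I \<and> (\<forall>a\<in>I. \<forall>b\<in>I. a + b \<in> I) \<and> (\<forall>r. \<forall>a\<in>I. r * a \<in> I)"

definition ideal_gen :: "'r::comm_ring_1 set \<Rightarrow> 'r set" where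
  "ideal_gen S = {\<Sum>s\<in>F. c s * s | F c. finite F \<and> F \<subseteq> S}"

definition ideal_prod :: "'r::comm_ring_1 set \<Rightarrow> 'r set \<Rightarrow> 'r set" where
  "ideal_prod I J = ideal_gen {a * b | a b. a \<in> I \<and> b \<in> J}"

fun ideal_pow :: "'r::comm_ring_1 set \<Rightarrow> nat \<Rightarrow> 'r set" where
  "ideal_pow I 0 = UNIV"
| "ideal_pow I (Suc n) = ideal_prod I (ideal_pow I n)"

definition ideal_colon :: "'r::comm_ring_1 set \<Rightarrow> 'r set \<Rightarrow> 'r set" where
  "ideal_colon I L = {f. \<forall>g\<in>L. f * g \<in> I}"

definition integral_closure :: "'r::comm_ring_1 set \<Rightarrow> 'r set" where
  "integral_closure I = {f. \<exists>n a. n \<ge> 1 \<and> (\<forall>i\<in>{1..n}. a i \<in> ideal_pow I i) \<and>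
       f ^ n + (\<Sum>i=1..n. a i * f ^ (n - i)) = 0}"

definition integrally_closed :: "'r::comm_ring_1 set \<Rightarrow> bool" where
  "integrally_closed I \<longleftrightarrow> integral_closure I = I"

text \<open>Q = k[x,y,z] modelled as ((k[z])[y])[x].\<close>
type_synonym 'a poly3 = "'a poly poly poly"

definition varX :: "'a::field poly3" where "varX = [:0, 1:]"
definition varY :: "'a::field poly3" where "varY = [:[:0, 1:]:]"
definition varZ :: "'a::field poly3" where "varZ = [:[:[:0, 1:]:]:]"

definition coeff3 :: "'a::field poly3 \<Rightarrow> nat \<Rightarrow> nat \<Rightarrow> nat \<Rightarrow> 'a" where
  "coeff3 p i j l = coeff (coeff (coeff p i) j) l"

definition homogeneous :: "'a::field poly3 \<Rightarrow> bool" where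
  "homogeneous p \<longleftrightarrow> (\<exists>d. \<forall>i j l. coeff3 p i j l \<noteq> 0 \<longrightarrow> i + j + l = d)"

definition homogeneous_ideal :: "'a::field poly3 set \<Rightarrow> bool" where
  "homogeneous_ideal I \<longleftrightarrow> is_ideal I \<and> I = ideal_gen {f \<in> I. homogeneous f}"

definition max_ideal :: "'a::field poly3 set" where
  "max_ideal = ideal_gen {varX, varY, varZ}"

end

theory Submission
  imports Defs
begin

text \<open>
  Since \<open>I \<subseteq> \<frak>m\<^sup>2\<close>, elements \<open>f \<in> I : x\<close> and \<open>g \<in> I : (y,z)\<close> lie in \<open>\<frak>m\<close>, so
  \<open>f = \<alpha>x + \<beta>y + \<gamma>z\<close> and \<open>g = ax + by + cz\<close>. Then \<open>u = fg\<close> equals both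
  \<open>P + f(by + cz)\<close> and \<open>\<alpha>gx + Q\<close> with \<open>P = a\<cdot>fx\<close>, \<open>Q = \<beta>\<cdot>gy + \<gamma>\<cdot>gz\<close> in \<open>I\<close>, and
  expanding \<open>(u - P)(u - Q) = \<alpha>gx \<cdot> f(by + cz)\<close> gives an equation of integral
  dependence of \<open>u\<close> over \<open>I\<close> whose constant term lies in \<open>I\<^sup>2\<close>. Hence \<open>u \<in> I\<close>.
\<close>

lemma sum_mem_closed:
  assumes "0 \<in> P" "\<And>a b. a \<in> P \<Longrightarrow> b \<in> P \<Longrightarrow> a + b \<in> P"
    and "finite F" "\<And>s. s \<in> F \<Longrightarrow> h s \<in> P"
  shows "sum h F \<in> P"
  using assms(3,4) by (induction F rule: finite_induct) (auto intro: assms(1,2))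

lemma ideal_gen_least:
  assumes "0 \<in> P" "\<And>a b. a \<in> P \<Longrightarrow> b \<in> P \<Longrightarrow> a + b \<in> P"
    and "\<And>r s. s \<in> S \<Longrightarrow> r * s \<in> P"
  shows "ideal_gen S \<subseteq> P"
proof
  fix v assume "v \<in> ideal_gen S"
  then obtain F c where v: "v = (\<Sum>s\<in>F. c s * s)" "finite F" "F \<subseteq> S"
    unfolding ideal_gen_def by blast
  show "v \<in> P" unfolding v(1) using v(2,3)
    by (intro sum_mem_closed[OF assms(1,2)]) (auto intro: assms(3))
qed

lemma ideal_gen_subset_ideal: "is_ideal I \<Longrightarrow> S \<subseteq> I \<Longrightarrow> ideal_gen S \<subseteq> I"
  by (rule ideal_gen_least) (auto simp: is_ideal_def)

lemma ideal_gen_superset: "s \<in> S \<Longrightarrow> s \<in> ideal_gen S"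
  unfolding ideal_gen_def by (intro CollectI exI[of _ "{s}"] exI[of _ "\<lambda>_. 1"]) simp

lemma is_ideal_ideal_gen: "is_ideal (ideal_gen S)"
  unfolding is_ideal_def
proof (intro conjI ballI allI)
  show "0 \<in> ideal_gen S" unfolding ideal_gen_def
    by (intro CollectI exI[of _ "{}"]) simp
next
  fix a b assume "a \<in> ideal_gen S" "b \<in> ideal_gen S"
  then obtain F c G d where a: "a = (\<Sum>s\<in>F. c s * s)" "finite F" "F \<subseteq> S"
    and b: "b = (\<Sum>s\<in>G. d s * s)" "finite G" "G \<subseteq> S"
    unfolding ideal_gen_def by blast
  define e where "e s = (if s \<in> F then c s else 0) + (if s \<in> G then d s else 0)" for s
  have "(\<Sum>s\<in>F \<union> G. e s * s) =
      (\<Sum>s\<in>F \<union> G. if s \<in> F then c s * s else 0) + (\<Sum>s\<in>F \<union> G. if s \<in> G then d s * s else 0)"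
    unfolding sum.distrib[symmetric] by (rule sum.cong) (auto simp: e_def distrib_right)
  also have "\<dots> = a + b"
    unfolding a b using a(2) b(2) by (simp add: sum.If_cases Int_absorb1)
  finally show "a + b \<in> ideal_gen S"
    unfolding ideal_gen_def using a b by (intro CollectI exI[of _ "F \<union> G"] exI[of _ e]) auto
next
  fix r a assume "a \<in> ideal_gen S"
  then obtain F c where a: "a = (\<Sum>s\<in>F. c s * s)" "finite F" "F \<subseteq> S"
    unfolding ideal_gen_def by blast
  have "r * a = (\<Sum>s\<in>F. (r * c s) * s)"
    unfolding a by (simp add: sum_distrib_left mult.assoc)
  then show "r * a \<in> ideal_gen S"
    unfolding ideal_gen_def using a by (intro CollectI exI[of _ F] exI[of _ "\<lambda>s. r * c s"]) auto
qed

lemma is_ideal_ideal_pow_Suc: "is_ideal (ideal_pow I (Suc n))"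
  by (simp add: ideal_prod_def is_ideal_ideal_gen)

lemma mem_ideal_pow_1: "a \<in> I \<Longrightarrow> a \<in> ideal_pow I 1"
proof -
  assume "a \<in> I"
  then have "a * 1 \<in> {a * b |a b. a \<in> I \<and> b \<in> UNIV}" by blast
  from ideal_gen_superset[OF this] show ?thesis by (simp add: ideal_prod_def)
qed

lemma ideal_pow_1:
  assumes "is_ideal I"
  shows "ideal_pow I 1 = I"
proof
  have "{a * b |a b. a \<in> I \<and> b \<in> UNIV} \<subseteq> I"
    using assms by (auto simp: is_ideal_def) (metis mult.commute)
  then show "ideal_pow I 1 \<subseteq> I"
    using ideal_gen_subset_ideal[OF assms] by (simp add: ideal_prod_def)
qed (use mem_ideal_pow_1 in blast)

lemma mult_mem_ideal_pow_2: "a \<in> I \<Longrightarrow> b \<in> I \<Longrightarrow> a * b \<in> ideal_pow I 2"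
  using ideal_gen_superset[of "a * b" "{a * b |a b. a \<in> I \<and> b \<in> ideal_pow I 1}"]
    mem_ideal_pow_1[of b I]
  by (auto simp: ideal_prod_def numeral_2_eq_2)

lemma quadratic_mem_integral_closure:
  assumes "a1 \<in> I" "a2 \<in> ideal_pow I 2" "u ^ 2 + a1 * u + a2 = 0"
  shows "u \<in> integral_closure I"
  unfolding integral_closure_def
proof (intro CollectI exI[of _ 2] exI[of _ "\<lambda>i. if i = 1 then a1 else a2"] conjI ballI)
  fix i :: nat assume "i \<in> {1..2}"
  then have "i = 1 \<or> i = 2" by auto
  then show "(if i = 1 then a1 else a2) \<in> ideal_pow I i"
    using assms(1,2) mem_ideal_pow_1 by auto
next
  have "{1..2::nat} = {1, 2}" by auto
  then show "u ^ 2 + (\<Sum>i = 1..2. (if i = 1 then a1 else a2) * u ^ (2 - i)) = 0"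
    using assms(3) by (simp add: add.assoc)
qed simp

lemma product_of_linear_forms_quadratic:
  fixes x y z \<alpha> \<beta> \<gamma> a b c :: "'r::comm_ring_1"
  assumes "f = \<alpha> * x + \<beta> * y + \<gamma> * z" "g = a * x + b * y + c * z"
  shows "(f * g) ^ 2 + - (a * (f * x) + \<beta> * (g * y) + \<gamma> * (g * z)) * (f * g)
    + ((a * \<beta> - b * \<alpha>) * ((f * x) * (g * y)) + (a * \<gamma> - c * \<alpha>) * ((f * x) * (g * z))) = 0"
  unfolding assms power2_eq_square by (simp add: algebra_simps)

lemma mult_linear_forms_mem_integrally_closed:
  fixes x y z \<alpha> \<beta> \<gamma> a b c :: "'r::comm_ring_1"
  assumes I: "is_ideal I" "integrally_closed I"
    and fx: "f * x \<in> I" and gy: "g * y \<in> I" and gz: "g * z \<in> I"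
    and "f = \<alpha> * x + \<beta> * y + \<gamma> * z" "g = a * x + b * y + c * z"
  shows "f * g \<in> I"
proof -
  let ?a1 = "- (a * (f * x) + \<beta> * (g * y) + \<gamma> * (g * z))"
  let ?a2 = "(a * \<beta> - b * \<alpha>) * ((f * x) * (g * y)) + (a * \<gamma> - c * \<alpha>) * ((f * x) * (g * z))"
  have "?a1 \<in> I"
    using I(1) fx gy gz unfolding is_ideal_def by (metis mult_minus1)
  moreover have "?a2 \<in> ideal_pow I 2"
  proof -
    have "is_ideal (ideal_pow I 2)"
      using is_ideal_ideal_pow_Suc[of I 1] by (simp add: numeral_2_eq_2)
    then show ?thesis
      using mult_mem_ideal_pow_2[OF fx gy] mult_mem_ideal_pow_2[OF fx gz]
      unfolding is_ideal_def by blast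
  qed
  moreover have "(f * g) ^ 2 + ?a1 * (f * g) + ?a2 = 0"
    by (rule product_of_linear_forms_quadratic[OF assms(6,7)])
  ultimately have "f * g \<in> integral_closure I"
    by (rule quadratic_mem_integral_closure)
  with I(2) show ?thesis by (simp add: integrally_closed_def)
qed

lemma coeff3_mult_0_0_0: "coeff3 (p * q) 0 0 0 = coeff3 p 0 0 0 * coeff3 q 0 0 0"
  by (simp add: coeff3_def coeff_mult)

lemma coeff3_mult_1_0_0:
  "coeff3 (p * q) 1 0 0 = coeff3 p 0 0 0 * coeff3 q 1 0 0 + coeff3 p 1 0 0 * coeff3 q 0 0 0"
  by (simp add: coeff3_def coeff_mult)

lemma coeff3_mult_0_1_0:
  "coeff3 (p * q) 0 1 0 = coeff3 p 0 0 0 * coeff3 q 0 1 0 + coeff3 p 0 1 0 * coeff3 q 0 0 0"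
  by (simp add: coeff3_def coeff_mult)

lemma max_ideal_coeff3_0_0_0: "p \<in> max_ideal \<Longrightarrow> coeff3 p 0 0 0 = 0"
proof -
  have "coeff3 (r * s) 0 0 0 = 0" if "s \<in> {varX, varY, varZ}" for r s :: "'a poly3"
    using that by (auto simp: coeff3_mult_0_0_0 varX_def varY_def varZ_def coeff3_def)
  then have "max_ideal \<subseteq> {p :: 'a poly3. coeff3 p 0 0 0 = 0}"
    unfolding max_ideal_def by (intro ideal_gen_least) (auto simp: coeff3_def)
  then show "p \<in> max_ideal \<Longrightarrow> coeff3 p 0 0 0 = 0" by blast
qed

lemma ideal_pow_2_max_ideal_linear_coeff3:
  assumes "p \<in> ideal_pow max_ideal 2"
  shows "coeff3 p 1 0 0 = 0 \<and> coeff3 p 0 1 0 = 0"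
proof -
  let ?P = "{p :: 'a::field poly3. coeff3 p 0 0 0 = 0 \<and> coeff3 p 1 0 0 = 0 \<and> coeff3 p 0 1 0 = 0}"
  have "ideal_pow max_ideal 2 = ideal_prod max_ideal (ideal_pow (max_ideal :: 'a poly3 set) 1)"
    by (simp add: numeral_2_eq_2)
  also have "\<dots> = ideal_gen {a * b |a b. a \<in> max_ideal \<and> b \<in> (max_ideal :: 'a poly3 set)}"
    unfolding max_ideal_def ideal_pow_1[OF is_ideal_ideal_gen] ideal_prod_def ..
  also have "\<dots> \<subseteq> ?P"
  proof (rule ideal_gen_least)
    show "0 \<in> ?P" by (simp add: coeff3_def)
    show "a + b \<in> ?P" if "a \<in> ?P" "b \<in> ?P" for a b
      using that by (simp add: coeff3_def)
    fix r s :: "'a poly3" assume "s \<in> {a * b |a b. a \<in> max_ideal \<and> b \<in> max_ideal}"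
    then obtain a b where "s = a * b" "coeff3 a 0 0 0 = 0" "coeff3 b 0 0 0 = 0"
      using max_ideal_coeff3_0_0_0 by blast
    then show "r * s \<in> ?P"
      by (simp only: mem_Collect_eq coeff3_mult_0_0_0 coeff3_mult_1_0_0 coeff3_mult_0_1_0)
        simp
  qed
  finally show ?thesis using assms by blast
qed

lemma const_poly_add: "[:a + b:] = [:a:] + [:b :: 'b::comm_ring_1:]"
  by simp

lemma const_poly_mult: "[:a * b:] = [:a:] * [:b :: 'b::comm_ring_1:]"
  by simp

lemma coeff3_0_0_0_eq_0_imp_linear_form:
  assumes "coeff3 (f :: 'a::field poly3) 0 0 0 = 0"
  shows "\<exists>\<alpha> \<beta> \<gamma>. f = \<alpha> * varX + \<beta> * varY + \<gamma> * varZ"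
proof -
  have split_const: "\<exists>q. p = [:coeff p 0:] + [:0, 1:] * q" for p :: "'b::comm_ring_1 poly"
    by (cases p) auto
  obtain F where F: "f = [:coeff f 0:] + [:0, 1:] * F" using split_const by blast
  obtain G where G: "coeff f 0 = [:coeff (coeff f 0) 0:] + [:0, 1:] * G" using split_const by blast
  obtain H where H: "coeff (coeff f 0) 0 = [:0:] + [:0, 1:] * H"
    using split_const assms by (metis coeff3_def)
  have "f = F * varX + [:G:] * varY + [:[:H:]:] * varZ"
    by (subst F, subst G, subst H)
      (simp add: varX_def varY_def varZ_def algebra_simps flip: const_poly_add const_poly_mult)
  then show ?thesis by blast
qed

theorem mainTheorem9:
  fixes I :: "'a::field poly3 set"
  assumes "homogeneous_ideal I"
    and "integrally_closed I"
    and "I \<subseteq> ideal_pow max_ideal 2"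
  shows "ideal_prod (ideal_colon I {varX}) (ideal_colon I (ideal_gen {varY, varZ})) \<subseteq> I"
proof -
  have ideal: "is_ideal I" using assms(1) by (simp add: homogeneous_ideal_def)
  have "f * g \<in> I" if "f \<in> ideal_colon I {varX}" "g \<in> ideal_colon I (ideal_gen {varY, varZ})" for f g
  proof -
    have fx: "f * varX \<in> I" and gy: "g * varY \<in> I" and gz: "g * varZ \<in> I"
      using that ideal_gen_superset[of _ "{varY, varZ}"] by (auto simp: ideal_colon_def)
    have "coeff3 f 0 0 0 = 0"
      using ideal_pow_2_max_ideal_linear_coeff3[of "f * varX"] fx assms(3)
      by (auto simp: coeff3_mult_1_0_0 varX_def coeff3_def)
    moreover have "coeff3 g 0 0 0 = 0"
      using ideal_pow_2_max_ideal_linear_coeff3[of "g * varY"] gy assms(3)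
      by (auto simp: coeff3_mult_0_1_0 varY_def coeff3_def)
    ultimately show ?thesis
      using coeff3_0_0_0_eq_0_imp_linear_form mult_linear_forms_mem_integrally_closed[OF ideal assms(2) fx gy gz]
      by metis
  qed
  then show ?thesis
    unfolding ideal_prod_def by (intro ideal_gen_subset_ideal[OF ideal]) auto
qed

end
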